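(* Let $X$ be a nonempty set, $f:X\to X$ a function, and $\tau_2$ the fuzzy topology on $X$ defined below. Then $(X,\tau_2)$ is normal.
   Context: A fuzzy subset of $X$ is a function $\mu:X\to[0,1]$; union is the pointwise supremum, intersection the pointwise minimum, complement $1-\mu$; $\emptyset$ is the constant $0$ and $X$ the constant $1$. A fuzzy topology is a family of fuzzy subsets containing $\emptyset$ and $X$, closed under arbitrary unions and finite intersections; complements of open fuzzy sets are closed; the topology generated by a base $\mathbb{B}$ consists of $\emptyset$ and all unions of subfamilies of $\mathbb{B}$. $\mathbb{N}=\{1,2,\dots\}$, $f^0=\mathrm{id}_X$, $f^{n+1}=f^n\circ f$. Definition of $\tau_2$: $J_0=\bigcap_{n\in\mathbb{N}} f^n(X)$, $J_n=f^{n-1}(X)\setminus f^n(X)$ for $n\in\mathbb{N}$; for $m\in\mathbb{N}$, $\mu_{K_m}(x)=\min\{1,n/m\}$ if $x\in J_n$ with $n\ge1$, and $\mu_{K_m}(x)=1$ otherwise; $\tau_2$ is generated by the base $\{K_m:m\in\mathbb{N}\}$. The space is normal if for any two closed fuzzy sets $F,G$ with $F\cap G=\emptyset$ there exist open fuzzy sets $U,V$ with $F\subseteq U$, $G\subseteq V$ and $U\cap V=\emptyset$. *)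

theory Defs
  imports Complex_Main
begin

text \<open>Fuzzy subsets of the carrier (the whole type 'a) are functions 'a => real
  (with values in [0,1]). Union = pointwise supremum, intersection = pointwise min.\<close>

type_synonym 'a fuzzy = "'a \<Rightarrow> real"

definition fuzzy_Union :: "'a fuzzy set \<Rightarrow> 'a fuzzy" where
  "fuzzy_Union S = (\<lambda>x. SUP \<mu>\<in>S. \<mu> x)"

definition fuzzy_inter :: "'a fuzzy \<Rightarrow> 'a fuzzy \<Rightarrow> 'a fuzzy" where
  "fuzzy_inter \<mu> \<nu> = (\<lambda>x. min (\<mu> x) (\<nu> x))"

definition fuzzy_compl :: "'a fuzzy \<Rightarrow> 'a fuzzy" where
  "fuzzy_compl \<mu> = (\<lambda>x. 1 - \<mu> x)"

definition fuzzy_empty :: "'a fuzzy" where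
  "fuzzy_empty = (\<lambda>x. 0)"

definition fuzzy_subset :: "'a fuzzy \<Rightarrow> 'a fuzzy \<Rightarrow> bool" where
  "fuzzy_subset \<mu> \<nu> \<longleftrightarrow> (\<forall>x. \<mu> x \<le> \<nu> x)"

text \<open>Topology generated by a base: the empty fuzzy set together with all unions of
  (nonempty) subfamilies of the base; the union of the empty subfamily is the empty
  fuzzy set, which is included explicitly.\<close>
definition generated_fuzzy_topology :: "'a fuzzy set \<Rightarrow> 'a fuzzy set" where
  "generated_fuzzy_topology B =
     insert fuzzy_empty {fuzzy_Union S | S. S \<subseteq> B \<and> S \<noteq> {}}"

definition fuzzy_closed :: "'a fuzzy set \<Rightarrow> 'a fuzzy \<Rightarrow> bool" where
  "fuzzy_closed T F \<longleftrightarrow> fuzzy_compl F \<in> T"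

definition fuzzy_normal :: "'a fuzzy set \<Rightarrow> bool" where
  "fuzzy_normal T \<longleftrightarrow>
    (\<forall>F G. fuzzy_closed T F \<and> fuzzy_closed T G \<and> fuzzy_inter F G = fuzzy_empty \<longrightarrow>
      (\<exists>U V. U \<in> T \<and> V \<in> T \<and> fuzzy_subset F U \<and> fuzzy_subset G V \<and>
             fuzzy_inter U V = fuzzy_empty))"

definition J0 :: "('a \<Rightarrow> 'a) \<Rightarrow> 'a set" where
  "J0 f = (\<Inter>n\<in>{1..}. range (f ^^ n))"

definition J :: "('a \<Rightarrow> 'a) \<Rightarrow> nat \<Rightarrow> 'a set" where
  "J f n = range (f ^^ (n - 1)) - range (f ^^ n)"

text \<open>K_m(x) = min 1 (n/m) if x lies in J_n with n >= 1, and 1 otherwise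
  (the J_n are pairwise disjoint, so n is unique).\<close>
definition K :: "('a \<Rightarrow> 'a) \<Rightarrow> nat \<Rightarrow> 'a fuzzy" where
  "K f m = (\<lambda>x. if \<exists>n\<ge>1. x \<in> J f n
                 then min 1 (real (THE n. n \<ge> 1 \<and> x \<in> J f n) / real m)
                 else 1)"

definition tau2 :: "('a \<Rightarrow> 'a) \<Rightarrow> 'a fuzzy set" where
  "tau2 f = generated_fuzzy_topology (K f ` {1..})"

end

theory Submission
  imports Defs
begin

text \<open>The basic open sets \<open>K f m\<close> decrease pointwise as \<open>m\<close> grows, so the union of any
  nonempty family of them is the one with least index: the open sets of \<open>\<tau>\<^sub>2\<close> form a chain
  under pointwise order. Then so do the closed sets, and two disjoint closed sets must have
  the smaller one equal to \<open>0\<close>; it is separated from the other by the open sets \<open>0\<close>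
  and \<open>K f 1 = 1\<close>.\<close>

lemma fuzzy_normal_if_chain:
  assumes empty_open: "fuzzy_empty \<in> T" and one_open: "(\<lambda>_. 1) \<in> T"
    and nonneg: "\<And>U x. U \<in> T \<Longrightarrow> 0 \<le> U x"
    and chain: "\<And>U V. U \<in> T \<Longrightarrow> V \<in> T \<Longrightarrow> fuzzy_subset U V \<or> fuzzy_subset V U"
  shows "fuzzy_normal T"
  unfolding fuzzy_normal_def
proof (intro allI impI, elim conjE)
  fix F G
  assume F: "fuzzy_closed T F" and G: "fuzzy_closed T G"
    and disjoint: "fuzzy_inter F G = fuzzy_empty"
  have le_1: "H x \<le> 1" if "fuzzy_closed T H" for H x
    using nonneg[of "fuzzy_compl H" x] that by (simp add: fuzzy_closed_def fuzzy_compl_def)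
  have min_0: "min (F x) (G x) = 0" for x
    using fun_cong[OF disjoint, of x] by (simp add: fuzzy_inter_def fuzzy_empty_def)
  have separated: "\<exists>U V. U \<in> T \<and> V \<in> T \<and> fuzzy_subset A U \<and> fuzzy_subset B V \<and>
                           fuzzy_inter U V = fuzzy_empty"
    if "fuzzy_closed T B" "\<And>x. min (A x) (B x) = 0" "fuzzy_subset A B" for A B
  proof (intro exI conjI)
    show "fuzzy_subset A fuzzy_empty"
      using that(2,3) by (auto simp: fuzzy_subset_def fuzzy_empty_def min_def split: if_splits)
    show "fuzzy_subset B (\<lambda>_. 1)"
      using le_1[OF that(1)] by (simp add: fuzzy_subset_def)
  qed (use empty_open one_open in \<open>auto simp: fuzzy_inter_def fuzzy_empty_def\<close>)
  have "fuzzy_subset (fuzzy_compl F) (fuzzy_compl G) \<or> fuzzy_subset (fuzzy_compl G) (fuzzy_compl F)"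
    using F G chain by (simp add: fuzzy_closed_def)
  then have "fuzzy_subset G F \<or> fuzzy_subset F G"
    by (auto simp: fuzzy_subset_def fuzzy_compl_def)
  then show "\<exists>U V. U \<in> T \<and> V \<in> T \<and> fuzzy_subset F U \<and> fuzzy_subset G V \<and>
                   fuzzy_inter U V = fuzzy_empty"
  proof
    assume "fuzzy_subset G F"
    moreover have "min (G x) (F x) = 0" for x
      using min_0 by (simp add: min.commute)
    ultimately obtain U V where
      "U \<in> T" "V \<in> T" "fuzzy_subset G U" "fuzzy_subset F V" "fuzzy_inter U V = fuzzy_empty"
      using separated[OF F] by blast
    then show ?thesis
      by (intro exI[of _ V] exI[of _ U]) (auto simp: fuzzy_inter_def min.commute)
  qed (use separated[OF G] min_0 in blast)
qed

lemma range_funpow_antimono: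
  fixes f :: "'a \<Rightarrow> 'a"
  assumes "k \<le> n"
  shows "range (f ^^ n) \<subseteq> range (f ^^ k)"
proof -
  obtain d where "n = k + d"
    using assms le_Suc_ex by blast
  then have "f ^^ n = f ^^ k \<circ> f ^^ d"
    by (simp add: funpow_add)
  then show ?thesis by auto
qed

lemma J_unique:
  assumes "x \<in> J f n" "x \<in> J f n'"
  shows "n = n'"
proof -
  have no_lt: "False" if "m < m'" "x \<in> J f m" "x \<in> J f m'" for m m'
  proof -
    have "range (f ^^ (m' - 1)) \<subseteq> range (f ^^ m)"
      using that(1) by (intro range_funpow_antimono) simp
    with that(2,3) show False by (auto simp: J_def)
  qed
  have "\<not> n < n'" "\<not> n' < n"
    using no_lt assms by blast+
  then show ?thesis by simp
qed

lemma K_1: "K f 1 = (\<lambda>_. 1)"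
proof
  fix x
  show "K f 1 x = 1"
  proof (cases "\<exists>n\<ge>1. x \<in> J f n")
    case True
    then obtain n where n: "n \<ge> 1" "x \<in> J f n" by blast
    then have "(THE n. n \<ge> 1 \<and> x \<in> J f n) = n"
      by (auto intro: the_equality J_unique)
    with True n(1) show ?thesis
      by (simp add: K_def)
  next
    case False
    then show ?thesis
      unfolding K_def by (rule if_not_P)
  qed
qed

lemma K_antimono:
  assumes "1 \<le> a" "a \<le> b"
  shows "K f b x \<le> K f a x"
proof -
  have "real t / real b \<le> real t / real a" for t
    using assms by (intro divide_left_mono) auto
  then have "min 1 (real t / real b) \<le> min 1 (real t / real a)" for t
    by (rule min.mono[OF order.refl])
  then show ?thesis
    unfolding K_def by simp
qed

lemma K_nonneg: "0 \<le> K f m x"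
  unfolding K_def by auto

lemma fuzzy_Union_K_eq_K_Least:
  assumes S: "S \<subseteq> K f ` {1..}" "S \<noteq> {}"
  shows "\<exists>a\<ge>1. fuzzy_Union S = K f a"
proof -
  define M where "M = {m. m \<ge> 1 \<and> K f m \<in> S}"
  have "M \<noteq> {}" using S unfolding M_def by auto
  define a where "a = (LEAST m. m \<in> M)"
  have a: "a \<in> M" unfolding a_def using \<open>M \<noteq> {}\<close> by (auto intro: LeastI)
  have "(SUP \<mu>\<in>S. \<mu> x) = K f a x" for x
  proof (rule cSup_eq_maximum)
    show "K f a x \<in> (\<lambda>\<mu>. \<mu> x) ` S" using a unfolding M_def by auto
  next
    fix y assume "y \<in> (\<lambda>\<mu>. \<mu> x) ` S"
    then obtain m where m: "m \<in> M" "y = K f m x"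
      using S unfolding M_def by auto
    have "a \<le> m" unfolding a_def using m(1) by (rule Least_le)
    with a show "y \<le> K f a x"
      using K_antimono m(2) unfolding M_def by auto
  qed
  then have "fuzzy_Union S = K f a" by (auto simp: fuzzy_Union_def)
  with a show ?thesis unfolding M_def by auto
qed

lemma tau2_cases:
  assumes "U \<in> tau2 f"
  shows "U = fuzzy_empty \<or> (\<exists>a\<ge>1. U = K f a)"
proof -
  have "U = fuzzy_empty \<or> (\<exists>S. U = fuzzy_Union S \<and> S \<subseteq> K f ` {1..} \<and> S \<noteq> {})"
    using assms by (simp add: tau2_def generated_fuzzy_topology_def)
  then show ?thesis
    using fuzzy_Union_K_eq_K_Least by metis
qed

lemma K_in_tau2:
  assumes "1 \<le> a"
  shows "K f a \<in> tau2 f"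
proof -
  have "fuzzy_Union {K f a} = K f a"
    by (simp add: fuzzy_Union_def)
  with assms show ?thesis
    unfolding tau2_def generated_fuzzy_topology_def
    by (intro insertI2 CollectI exI[of _ "{K f a}"]) auto
qed

lemma fuzzy_empty_in_tau2: "fuzzy_empty \<in> tau2 f"
  unfolding tau2_def generated_fuzzy_topology_def by simp

lemma tau2_chain:
  assumes "U \<in> tau2 f" "V \<in> tau2 f"
  shows "fuzzy_subset U V \<or> fuzzy_subset V U"
proof -
  have K_comparable: "fuzzy_subset (K f a) (K f b) \<or> fuzzy_subset (K f b) (K f a)"
    if "1 \<le> a" "1 \<le> b" for a b
    using K_antimono[OF that(1), of b f] K_antimono[OF that(2), of a f]
    by (cases "a \<le> b") (auto simp: fuzzy_subset_def)
  have empty_subset: "fuzzy_subset fuzzy_empty (K f a)" for a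
    by (simp add: fuzzy_subset_def fuzzy_empty_def K_nonneg)
  show ?thesis
    using tau2_cases[OF assms(1)] tau2_cases[OF assms(2)] K_comparable empty_subset
    by (auto simp: fuzzy_subset_def)
qed

theorem proposition3p11:
  fixes f :: "'a \<Rightarrow> 'a"
  shows "fuzzy_normal (tau2 f)"
proof (rule fuzzy_normal_if_chain)
  show "(\<lambda>_. 1) \<in> tau2 f"
    using K_in_tau2[of 1 f] unfolding K_1 by simp
  show "0 \<le> U x" if "U \<in> tau2 f" for U x
    using tau2_cases[OF that] K_nonneg by (auto simp: fuzzy_empty_def)
qed (use fuzzy_empty_in_tau2 tau2_chain in auto)

end
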